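(* Let $0<\rho<\mu$, let $\beta$ be the unique real with $\rho(\beta)=\rho$, let $\ell\in\mathbb{N}$ be such that $t=\ell\rho$ is an integer, and let $0<\varepsilon<1$. Let $X_\beta$ have distribution $P_\beta$ and set $$\delta=\ell^{1/2}\,\frac{\mathrm{Var}(\mathrm{wt}_{\mathcal{A}}(X_\beta))^{1/2}}{(1-\varepsilon)^{1/2}}.$$ Then $$\sum_{\substack{j\in\mathbb{Z}\\ -\delta<j<\delta}}\bigl|\mathcal{S}^\ell_{t+j}\bigr|\ \ge\ \varepsilon\, q^{\ell H_\rho-|\beta|\delta}.$$
   Context: Let $q>1$ be fixed. Let $\mathcal{A}$ be a finite abelian group with $|\mathcal{A}|\ge 2$ and $\mathrm{wt}_{\mathcal{A}}:\mathcal{A}\to\mathbb{Z}_{\ge 0}$ a weight function with $\mathrm{wt}_{\mathcal{A}}(a)=0$ iff $a=0$, extended additively to $\mathcal{A}^\ell$ by $\mathrm{wt}_{\Sigma\mathcal{A}}(v)=\sum_{i=1}^\ell\mathrm{wt}_{\mathcal{A}}(v_i)$. For an integer $s$, $\mathcal{S}^\ell_s=\{v\in\mathcal{A}^\ell:\mathrm{wt}_{\Sigma\mathcal{A}}(v)=s\}$. Let $\mu=\max_a\mathrm{wt}_{\mathcal{A}}(a)$. For $\beta\in\mathbb{R}$ let $P_\beta(a)=q^{-\beta\,\mathrm{wt}_{\mathcal{A}}(a)}/\mathcal{Z}(\beta)$, $\mathcal{Z}(\beta)=\sum_aq^{-\beta\,\mathrm{wt}_{\mathcal{A}}(a)}$,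 $\rho(\beta)=\sum_aP_\beta(a)\mathrm{wt}_{\mathcal{A}}(a)$; $\rho$ is a bijection $\mathbb{R}\to(0,\mu)$. For $\rho=\rho(\beta)$, $H_\rho=-\sum_{a:P_\beta(a)\ne0}P_\beta(a)\log_qP_\beta(a)$. *)

theory Defs
  imports Complex_Main
begin

definition Zpart :: "real \<Rightarrow> ('a::finite \<Rightarrow> nat) \<Rightarrow> real \<Rightarrow> real" where
  "Zpart q wt \<beta> = (\<Sum>a\<in>UNIV. q powr (- \<beta> * real (wt a)))"

definition Pbeta :: "real \<Rightarrow> ('a::finite \<Rightarrow> nat) \<Rightarrow> real \<Rightarrow> 'a \<Rightarrow> real" where
  "Pbeta q wt \<beta> a = q powr (- \<beta> * real (wt a)) / Zpart q wt \<beta>"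

definition rhoF :: "real \<Rightarrow> ('a::finite \<Rightarrow> nat) \<Rightarrow> real \<Rightarrow> real" where
  "rhoF q wt \<beta> = (\<Sum>a\<in>UNIV. Pbeta q wt \<beta> a * real (wt a))"

definition varF :: "real \<Rightarrow> ('a::finite \<Rightarrow> nat) \<Rightarrow> real \<Rightarrow> real" where
  "varF q wt \<beta> = (\<Sum>a\<in>UNIV. Pbeta q wt \<beta> a * (real (wt a) - rhoF q wt \<beta>)\<^sup>2)"

definition entropyF :: "real \<Rightarrow> ('a::finite \<Rightarrow> nat) \<Rightarrow> real \<Rightarrow> real" where
  "entropyF q wt \<beta> = - (\<Sum>a\<in>{a. Pbeta q wt \<beta> a \<noteq> 0}. Pbeta q wt \<beta> a * log q (Pbeta q wt \<beta> a))"

definition muF :: "('a::finite \<Rightarrow> nat) \<Rightarrow> nat" where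
  "muF wt = Max (range wt)"

definition sphere :: "('a \<Rightarrow> nat) \<Rightarrow> nat \<Rightarrow> int \<Rightarrow> 'a list set" where
  "sphere wt l s = {v. length v = l \<and> int (\<Sum>x\<leftarrow>v. wt x) = s}"

end

theory Submission
  imports Defs
begin

text \<open>Let \<open>P\<^sub>\<beta>\<^sup>\<ell>\<close> be the product distribution on \<open>\<A>\<^sup>\<ell>\<close>. Its weight has mean \<open>t = \<ell>\<rho>\<close> and
  variance \<open>\<ell> Var(wt(X\<^sub>\<beta>)) = (1 - \<epsilon>) \<delta>\<^sup>2\<close>, so by Chebyshev's inequality the vectors of weight
  within \<open>\<delta>\<close> of \<open>t\<close> carry mass at least \<open>\<epsilon>\<close>. Each such vector \<open>v\<close> has probability exactly
  \<open>q\<^bsup>\<beta>(t - wt v) - \<ell>H\<^sub>\<rho>\<^esup> \<le> q\<^bsup>|\<beta>|\<delta> - \<ell>H\<^sub>\<rho>\<^esup>\<close>, so there must be at least \<open>\<epsilon> q\<^bsup>\<ell>H\<^sub>\<rho> - |\<beta>|\<delta>\<^esup>\<close> of them.\<close>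

lemma finite_lists_length: "finite {v :: 'a::finite list. length v = n}"
  using finite_lists_length_eq[of "UNIV :: 'a set" n] by simp

lemma sum_lists_length_Suc:
  fixes F :: "'a::finite list \<Rightarrow> 'b::comm_monoid_add"
  shows "(\<Sum>v | length v = Suc n. F v) = (\<Sum>a\<in>UNIV. \<Sum>v | length v = n. F (a # v))"
proof -
  have "{v :: 'a list. length v = Suc n} = (\<lambda>x. snd x # fst x) ` ({v. length v = n} \<times> UNIV)"
    using lists_length_Suc_eq[of "UNIV :: 'a set" n] by (simp add: case_prod_beta)
  then have "(\<Sum>v | length v = Suc n. F v) = (\<Sum>x\<in>{v. length v = n} \<times> UNIV. F (snd x # fst x))"
    by (simp add: sum.reindex inj_split_Cons[unfolded case_prod_beta])
  also have "\<dots> = (\<Sum>v | length v = n. \<Sum>a\<in>UNIV. F (a # v))"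
    by (simp add: sum.cartesian_product case_prod_beta)
  finally show ?thesis
    by (simp add: sum.swap[of _ "{v. length v = n}"])
qed

lemma sum_prod_list_lists_length:
  fixes p :: "'a::finite \<Rightarrow> real"
  shows "(\<Sum>v | length v = n. prod_list (map p v)) = (\<Sum>a\<in>UNIV. p a) ^ n"
proof (induction n)
  case 0
  have "{v :: 'a list. length v = 0} = {[]}" by auto
  then show ?case by simp
next
  case (Suc n)
  then show ?case
    by (simp add: sum_lists_length_Suc sum_distrib_left[symmetric] sum_distrib_right[symmetric])
qed

lemma sum_prod_list_sum_list_centred:
  fixes p d :: "'a::finite \<Rightarrow> real"
  assumes "(\<Sum>a\<in>UNIV. p a) = 1" and "(\<Sum>a\<in>UNIV. p a * d a) = 0"
  shows "(\<Sum>v | length v = n. prod_list (map p v) * sum_list (map d v)) = 0"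
proof (induction n)
  case 0
  have "{v :: 'a list. length v = 0} = {[]}" by auto
  then show ?case by simp
next
  case (Suc n)
  have "(\<Sum>v | length v = Suc n. prod_list (map p v) * sum_list (map d v))
      = (\<Sum>a\<in>UNIV. p a * d a * (\<Sum>v | length v = n. prod_list (map p v))
          + p a * (\<Sum>v | length v = n. prod_list (map p v) * sum_list (map d v)))"
    by (simp add: sum_lists_length_Suc sum_distrib_left algebra_simps sum.distrib)
  also have "\<dots> = 0"
    using Suc assms by (simp add: sum_prod_list_lists_length sum_distrib_right[symmetric])
  finally show ?case .
qed

lemma sum_prod_list_sum_list_squared:
  fixes p d :: "'a::finite \<Rightarrow> real"
  assumes "(\<Sum>a\<in>UNIV. p a) = 1" and "(\<Sum>a\<in>UNIV. p a * d a) = 0"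
  shows "(\<Sum>v | length v = n. prod_list (map p v) * (sum_list (map d v))\<^sup>2)
       = real n * (\<Sum>a\<in>UNIV. p a * (d a)\<^sup>2)"
proof (induction n)
  case 0
  have "{v :: 'a list. length v = 0} = {[]}" by auto
  then show ?case by simp
next
  case (Suc n)
  let ?m0 = "\<Sum>v | length v = n. prod_list (map p v)"
  let ?m1 = "\<Sum>v | length v = n. prod_list (map p v) * sum_list (map d v)"
  let ?m2 = "\<Sum>v | length v = n. prod_list (map p v) * (sum_list (map d v))\<^sup>2"
  have "(\<Sum>v | length v = Suc n. prod_list (map p v) * (sum_list (map d v))\<^sup>2)
      = (\<Sum>a\<in>UNIV. p a * (d a)\<^sup>2 * ?m0 + 2 * (p a * d a) * ?m1 + p a * ?m2)"
    by (simp add: sum_lists_length_Suc sum_distrib_left algebra_simps sum.distrib power2_eq_square)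
  also have "\<dots> = (\<Sum>a\<in>UNIV. p a * (d a)\<^sup>2) + real n * (\<Sum>a\<in>UNIV. p a * (d a)\<^sup>2)"
    using Suc assms
    by (simp add: sum_prod_list_lists_length sum_prod_list_sum_list_centred sum.distrib
        sum_distrib_right[symmetric])
  finally show ?case by (simp add: algebra_simps)
qed

lemma sum_list_map_centred:
  "(\<Sum>x\<leftarrow>v. real (wt x) - r) = real (\<Sum>x\<leftarrow>v. wt x) - real (length v) * r"
  by (induction v) (simp_all add: algebra_simps)

lemma chebyshev_inequality_sum:
  fixes P D :: "'b \<Rightarrow> real"
  assumes "finite L" and "\<And>v. v \<in> L \<Longrightarrow> P v \<ge> 0" and "\<delta> > 0"
  shows "(\<Sum>v\<in>L. P v) - (\<Sum>v\<in>L. P v * (D v)\<^sup>2) / \<delta>\<^sup>2 \<le> (\<Sum>v | v \<in> L \<and> \<bar>D v\<bar> < \<delta>. P v)"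
proof -
  let ?S = "{v. v \<in> L \<and> \<bar>D v\<bar> < \<delta>}"
  have "(\<Sum>v\<in>L - ?S. P v) \<le> (\<Sum>v\<in>L - ?S. P v * (D v)\<^sup>2 / \<delta>\<^sup>2)"
  proof (rule sum_mono)
    fix v assume "v \<in> L - ?S"
    then have "\<delta>\<^sup>2 \<le> (D v)\<^sup>2" and "P v \<ge> 0"
      using assms(2,3) by (auto simp: abs_le_square_iff[symmetric])
    then show "P v \<le> P v * (D v)\<^sup>2 / \<delta>\<^sup>2"
      using assms(3) mult_left_mono[of "\<delta>\<^sup>2" "(D v)\<^sup>2" "P v"] by (simp add: field_simps)
  qed
  also have "\<dots> \<le> (\<Sum>v\<in>L. P v * (D v)\<^sup>2 / \<delta>\<^sup>2)"
    using assms(1,2) by (intro sum_mono2) auto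
  also have "\<dots> = (\<Sum>v\<in>L. P v * (D v)\<^sup>2) / \<delta>\<^sup>2"
    by (simp add: sum_divide_distrib)
  finally show ?thesis
    using sum.subset_diff[of ?S L P] assms(1) by auto
qed

lemma Zpart_pos: "q > 0 \<Longrightarrow> Zpart q wt \<beta> > 0"
  unfolding Zpart_def by (intro sum_pos) auto

lemma Pbeta_pos: "q > 0 \<Longrightarrow> Pbeta q wt \<beta> a > 0"
  by (simp add: Pbeta_def Zpart_pos)

lemma sum_Pbeta: "q > 0 \<Longrightarrow> (\<Sum>a\<in>UNIV. Pbeta q wt \<beta> a) = 1"
  using Zpart_pos[of q wt \<beta>] by (simp add: Pbeta_def Zpart_def sum_divide_distrib[symmetric])

lemma sum_Pbeta_centred:
  "q > 0 \<Longrightarrow> (\<Sum>a\<in>UNIV. Pbeta q wt \<beta> a * (real (wt a) - rhoF q wt \<beta>)) = 0"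
  by (simp add: right_diff_distrib sum_subtractf sum_distrib_right[symmetric] sum_Pbeta
      rhoF_def)

lemma varF_pos:
  assumes "q > 0" and "wt a \<noteq> rhoF q wt \<beta>"
  shows "varF q wt \<beta> > 0"
proof -
  have "Pbeta q wt \<beta> a * (real (wt a) - rhoF q wt \<beta>)\<^sup>2 > 0"
    using assms Pbeta_pos[of q wt \<beta> a] by simp
  then show ?thesis
    unfolding varF_def using Pbeta_pos[OF assms(1), of wt \<beta>, THEN less_imp_le]
    by (intro sum_pos2[OF finite UNIV_I]) (auto intro: mult_nonneg_nonneg)
qed

lemma entropyF_eq:
  assumes "q > 1"
  shows "entropyF q wt \<beta> = \<beta> * rhoF q wt \<beta> + log q (Zpart q wt \<beta>)"
proof -
  let ?p = "Pbeta q wt \<beta>" and ?Z = "Zpart q wt \<beta>"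
  have "?p a \<noteq> 0" for a
    using Pbeta_pos[of q wt \<beta> a] assms by simp
  then have support: "{a. ?p a \<noteq> 0} = UNIV"
    by blast
  have log_p: "log q (?p a) = - \<beta> * real (wt a) - log q ?Z" for a
    using assms Zpart_pos[of q wt \<beta>] by (simp add: Pbeta_def log_divide)
  have "?p a * log q (?p a) = - \<beta> * (?p a * real (wt a)) - log q ?Z * ?p a" for a
    by (simp add: log_p algebra_simps)
  with support show ?thesis
    using sum_Pbeta[of q wt \<beta>] assms
    by (simp add: entropyF_def rhoF_def sum_subtractf sum_negf sum_distrib_left[symmetric]
        sum_distrib_right[symmetric])
qed

lemma prod_list_Pbeta_powr:
  assumes "q > 0"
  shows "prod_list (map (Pbeta q wt \<beta>) v)
       = q powr (- \<beta> * real (\<Sum>x\<leftarrow>v. wt x)) / Zpart q wt \<beta> ^ length v"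
proof (induction v)
  case (Cons a v)
  have "q powr (- \<beta> * real (wt a)) * q powr (- \<beta> * real (\<Sum>x\<leftarrow>v. wt x))
      = q powr (- \<beta> * real (\<Sum>x\<leftarrow>a # v. wt x))"
    by (simp add: powr_add[symmetric] algebra_simps)
  then show ?case
    using Cons by (simp add: Pbeta_def)
qed (use assms in simp)

text \<open>An exact form of the asymptotic equipartition property: the product probability of a vector
  depends only on how far its weight is from the mean weight.\<close>
lemma prod_list_Pbeta_entropy:
  assumes "q > 1"
  shows "prod_list (map (Pbeta q wt \<beta>) v)
       = q powr (\<beta> * (real (length v) * rhoF q wt \<beta> - real (\<Sum>x\<leftarrow>v. wt x))
                 - real (length v) * entropyF q wt \<beta>)"
proof -
  let ?Z = "Zpart q wt \<beta>"
  have "?Z ^ length v = q powr (real (length v) * log q ?Z)"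
    using assms Zpart_pos[of q wt \<beta>] powr_power[of q "log q ?Z" "length v"]
    by (simp add: mult.commute)
  then show ?thesis
    using assms by (simp add: prod_list_Pbeta_powr entropyF_eq algebra_simps powr_diff powr_add)
qed

lemma card_lists_near_weight:
  fixes wt :: "'a::finite \<Rightarrow> nat" and t :: int and \<delta> :: real
  shows "card {v. length v = l \<and> \<bar>real (\<Sum>x\<leftarrow>v. wt x) - t\<bar> < \<delta>}
       = (\<Sum>j | - \<delta> < real_of_int j \<and> real_of_int j < \<delta>. card (sphere wt l (t + j)))"
proof -
  let ?J = "{j::int. - \<delta> < real_of_int j \<and> real_of_int j < \<delta>}"
  have "?J \<subseteq> {- \<lceil>\<delta>\<rceil>..\<lceil>\<delta>\<rceil>}"
  proof
    fix j assume "j \<in> ?J"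
    then have "- \<delta> < of_int j" "of_int j < \<delta>"
      by simp_all
    with le_of_int_ceiling[of \<delta>] have "- real_of_int j \<le> of_int \<lceil>\<delta>\<rceil>" "real_of_int j \<le> of_int \<lceil>\<delta>\<rceil>"
      by linarith+
    then show "j \<in> {- \<lceil>\<delta>\<rceil>..\<lceil>\<delta>\<rceil>}"
      by (metis atLeastAtMost_iff minus_le_iff of_int_le_iff of_int_minus)
  qed
  then have fin_J: "finite ?J"
    by (rule finite_subset) simp
  have fin_sphere: "finite (sphere wt l s)" for s
    by (rule finite_subset[OF _ finite_lists_length[of l]]) (auto simp: sphere_def)
  have "{v. length v = l \<and> \<bar>real (\<Sum>x\<leftarrow>v. wt x) - t\<bar> < \<delta>}
      = (\<Union>j\<in>?J. sphere wt l (t + j))"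
  proof (intro equalityI subsetI)
    fix v assume "v \<in> {v. length v = l \<and> \<bar>real (\<Sum>x\<leftarrow>v. wt x) - t\<bar> < \<delta>}"
    then have "int (\<Sum>x\<leftarrow>v. wt x) - t \<in> ?J"
      and "v \<in> sphere wt l (t + (int (\<Sum>x\<leftarrow>v. wt x) - t))"
      by (auto simp: sphere_def abs_less_iff)
    then show "v \<in> (\<Union>j\<in>?J. sphere wt l (t + j))"
      by blast
  next
    fix v assume "v \<in> (\<Union>j\<in>?J. sphere wt l (t + j))"
    then obtain j where "j \<in> ?J" "length v = l" "int (\<Sum>x\<leftarrow>v. wt x) = t + j"
      by (auto simp: sphere_def)
    moreover from this(3) have "real (\<Sum>x\<leftarrow>v. wt x) = real_of_int t + real_of_int j"
      by (metis of_int_add of_int_of_nat_eq)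
    ultimately show "v \<in> {v. length v = l \<and> \<bar>real (\<Sum>x\<leftarrow>v. wt x) - t\<bar> < \<delta>}"
      by (simp add: abs_less_iff)
  qed
  also have "card \<dots> = (\<Sum>j\<in>?J. card (sphere wt l (t + j)))"
    using fin_J fin_sphere by (intro card_UN_disjoint) (auto simp: sphere_def)
  finally show ?thesis .
qed

text \<open>The hypotheses \<open>|\<A>| \<ge> 2\<close> and \<open>\<rho> < \<mu>\<close> only guarantee that \<open>\<beta>\<close> exists.\<close>
theorem mainTheorem7:
  fixes q :: real and wt :: "'a::{finite, ab_group_add} \<Rightarrow> nat"
    and \<rho> \<beta> \<epsilon> :: real and l :: nat and t :: int
  assumes "q > 1"
    and "card (UNIV :: 'a set) \<ge> 2"
    and "\<And>a. wt a = 0 \<longleftrightarrow> a = 0"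
    and "0 < \<rho>" and "\<rho> < real (muF wt)"
    and "rhoF q wt \<beta> = \<rho>"
    and "l \<ge> 1"
    and "real_of_int t = real l * \<rho>"
    and "0 < \<epsilon>" and "\<epsilon> < 1"
  shows "(\<Sum>j\<in>{j::int. - (sqrt (real l) * sqrt (varF q wt \<beta>) / sqrt (1 - \<epsilon>)) < real_of_int j
                      \<and> real_of_int j < sqrt (real l) * sqrt (varF q wt \<beta>) / sqrt (1 - \<epsilon>)}.
            real (card (sphere wt l (t + j))))
         \<ge> \<epsilon> * q powr (real l * entropyF q wt \<beta>
                  - \<bar>\<beta>\<bar> * (sqrt (real l) * sqrt (varF q wt \<beta>) / sqrt (1 - \<epsilon>)))"
proof -
  define \<delta> where "\<delta> = sqrt (real l) * sqrt (varF q wt \<beta>) / sqrt (1 - \<epsilon>)"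
  define P where "P = (\<lambda>v. prod_list (map (Pbeta q wt \<beta>) v))"
  define D where "D = (\<lambda>v. real (\<Sum>x\<leftarrow>v. wt x) - real_of_int t)"
  define S where "S = {v. length v = l \<and> \<bar>D v\<bar> < \<delta>}"
  let ?bound = "q powr (\<bar>\<beta>\<bar> * \<delta> - real l * entropyF q wt \<beta>)"
  have var: "varF q wt \<beta> > 0"
    using varF_pos[of q wt 0 \<beta>] assms(1,3,4,6) by force
  then have \<delta>: "\<delta> > 0" "\<delta>\<^sup>2 = real l * varF q wt \<beta> / (1 - \<epsilon>)"
    using assms(7,10) by (simp_all add: \<delta>_def power_divide power_mult_distrib)
  have P_nonneg: "P v \<ge> 0" for v
    using assms(1) Pbeta_pos[of q wt \<beta>] by (auto simp: P_def less_imp_le intro!: prod_list_nonneg)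
  have "D v = (\<Sum>x\<leftarrow>v. real (wt x) - \<rho>)" if "length v = l" for v
    using that assms(8) by (simp add: D_def sum_list_map_centred)
  then have "(\<Sum>v | length v = l. P v * (D v)\<^sup>2) = real l * varF q wt \<beta>"
    using sum_prod_list_sum_list_squared[OF sum_Pbeta sum_Pbeta_centred, of q wt \<beta> l] assms(1,6)
    by (simp add: P_def varF_def)
  then have "\<epsilon> \<le> (\<Sum>v\<in>S. P v)"
    using chebyshev_inequality_sum[OF finite_lists_length[of l], where P = P and \<delta> = \<delta> and D = D]
      \<delta> var P_nonneg assms(1,7,10)
    by (simp add: S_def P_def sum_prod_list_lists_length sum_Pbeta)
  also have "\<dots> \<le> real (card S) * ?bound"
  proof (rule sum_bounded_above)
    fix v assume "v \<in> S"
    have "\<beta> * (real_of_int t - real (\<Sum>x\<leftarrow>v. wt x)) \<le> \<bar>\<beta>\<bar> * \<bar>D v\<bar>"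
      using abs_ge_self[of "\<beta> * (real_of_int t - real (\<Sum>x\<leftarrow>v. wt x))"]
      by (simp add: D_def abs_mult abs_minus_commute)
    also have "\<dots> \<le> \<bar>\<beta>\<bar> * \<delta>"
      using \<open>v \<in> S\<close> by (intro mult_left_mono) (auto simp: S_def)
    finally show "P v \<le> ?bound"
      using \<open>v \<in> S\<close> assms(1,6,8) by (simp add: P_def S_def prod_list_Pbeta_entropy)
  qed
  finally have "\<epsilon> * q powr (real l * entropyF q wt \<beta> - \<bar>\<beta>\<bar> * \<delta>) \<le> real (card S)"
    using assms(1) by (simp add: powr_diff field_simps)
  then show ?thesis
    using card_lists_near_weight[where l = l and wt = wt and t = t and \<delta> = \<delta>]
    by (simp add: S_def D_def \<delta>_def)
qed

end
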